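(* Let $(\Omega,\mathcal{F})$ be a measurable space, $\mathcal{P}$ a nonempty set of probability measures on it, $\hat{\mathbb{E}}[Z]=\sup_{P\in\mathcal{P}}E_P[Z]$, and let $X=(X_1,\dots,X_n)^T$ be an $n$-dimensional random vector with $\hat{\mathbb{E}}[\|X\|^2]<\infty$, where $\|\cdot\|$ is the Euclidean norm. Let $\mathcal{S}=\{E_P[(X-E_P[X])(X-E_P[X])^T]:P\in\mathrm{co}(\mathcal{P})\}$. Then for every $\Sigma=(c_{ij})_{1\le i,j\le n}\in\mathcal{S}$, $$\underline{C}(X_i,X_j)\le c_{ij}\le\overline{C}(X_i,X_j)\quad\text{for all }1\le i,j\le n.$$
   Context: $\mathrm{co}(\mathcal{P})$ is the convex hull of $\mathcal{P}$. For a random variable $W$ with $\hat{\mathbb{E}}[W^2]<\infty$: $\overline{\mu}_W=\hat{\mathbb{E}}[W]$, $\underline{\mu}_W=-\hat{\mathbb{E}}[-W]$, $M_W=[\underline{\mu}_W,\overline{\mu}_W]$. Upper covariance $\overline{C}(Y,Z)=\max_{\mu_2\in M_Z}\min_{\mu_1\in M_Y}\hat{\mathbb{E}}[(Y-\mu_1)(Z-\mu_2)]$; lower covariance $\underline{C}(Y,Z)=\min_{\mu_2\in M_Z}\max_{\mu_1\in M_Y}\left(-\hat{\mathbb{E}}[-(Y-\mu_1)(Z-\mu_2)]\right)$. *)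

theory Defs
  imports "HOL-Probability.Probability"
begin

definition sub_exp :: "'a measure set \<Rightarrow> ('a \<Rightarrow> real) \<Rightarrow> real" where
  "sub_exp Ps Z = (SUP P\<in>Ps. integral\<^sup>L P Z)"

definition upper_mean :: "'a measure set \<Rightarrow> ('a \<Rightarrow> real) \<Rightarrow> real" where
  "upper_mean Ps W = sub_exp Ps W"

definition lower_mean :: "'a measure set \<Rightarrow> ('a \<Rightarrow> real) \<Rightarrow> real" where
  "lower_mean Ps W = - sub_exp Ps (\<lambda>\<omega>. - W \<omega>)"

definition mean_interval :: "'a measure set \<Rightarrow> ('a \<Rightarrow> real) \<Rightarrow> real set" where
  "mean_interval Ps W = {lower_mean Ps W .. upper_mean Ps W}"

definition upper_cov :: "'a measure set \<Rightarrow> ('a \<Rightarrow> real) \<Rightarrow> ('a \<Rightarrow> real) \<Rightarrow> real" where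
  "upper_cov Ps Y Z = (SUP \<mu>2\<in>mean_interval Ps Z. INF \<mu>1\<in>mean_interval Ps Y.
       sub_exp Ps (\<lambda>\<omega>. (Y \<omega> - \<mu>1) * (Z \<omega> - \<mu>2)))"

definition lower_cov :: "'a measure set \<Rightarrow> ('a \<Rightarrow> real) \<Rightarrow> ('a \<Rightarrow> real) \<Rightarrow> real" where
  "lower_cov Ps Y Z = (INF \<mu>2\<in>mean_interval Ps Z. SUP \<mu>1\<in>mean_interval Ps Y.
       - sub_exp Ps (\<lambda>\<omega>. - ((Y \<omega> - \<mu>1) * (Z \<omega> - \<mu>2))))"

definition measure_co :: "'a measure \<Rightarrow> 'a measure set \<Rightarrow> 'a measure set" where
  "measure_co \<Omega> Ps = {Q. sets Q = sets \<Omega> \<and>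
     (\<exists>(k::nat) (p::nat \<Rightarrow> 'a measure) (w::nat \<Rightarrow> real).
        (\<forall>i<k. p i \<in> Ps \<and> 0 \<le> w i) \<and> (\<Sum>i<k. w i) = 1 \<and>
        (\<forall>A\<in>sets \<Omega>. emeasure Q A = (\<Sum>i<k. ennreal (w i) * emeasure (p i) A)))}"

definition cov_matrix :: "'a measure \<Rightarrow> ('a \<Rightarrow> real ^ 'n) \<Rightarrow> real ^ 'n ^ 'n" where
  "cov_matrix Q X = (\<chi> i j. integral\<^sup>L Q (\<lambda>\<omega>.
      (X \<omega> $ i - integral\<^sup>L Q (\<lambda>\<omega>'. X \<omega>' $ i)) *
      (X \<omega> $ j - integral\<^sup>L Q (\<lambda>\<omega>'. X \<omega>' $ j))))"

definition cov_set :: "'a measure \<Rightarrow> 'a measure set \<Rightarrow> ('a \<Rightarrow> real ^ 'n) \<Rightarrow> (real ^ 'n ^ 'n) set" where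
  "cov_set \<Omega> Ps X = (\<lambda>Q. cov_matrix Q X) ` measure_co \<Omega> Ps"

end

theory Submission
  imports Defs
begin

text \<open>Every Q in the convex hull is a finite mixture of measures in \<open>Ps\<close>, so its integrals
  are the corresponding convex combinations; hence \<open>E\<^sub>Q f \<le> sub_exp Ps f\<close>, and in particular
  \<open>E\<^sub>Q Y\<close> and \<open>E\<^sub>Q Z\<close> lie in the mean intervals. Since \<open>Z - E\<^sub>Q Z\<close> has Q-mean zero,
  the Q-covariance \<open>c\<close> equals \<open>E\<^sub>Q[(Y - \<mu>\<^sub>1)(Z - E\<^sub>Q Z)] \<le> sub_exp Ps ((Y - \<mu>\<^sub>1)(Z - E\<^sub>Q Z))\<close>
  for every \<open>\<mu>\<^sub>1\<close>; choosing \<open>\<mu>\<^sub>2 = E\<^sub>Q Z\<close> in the max-min therefore gives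
  \<open>c \<le> upper_cov\<close>, and symmetrically \<open>lower_cov \<le> c\<close>. The uniform second-moment bound
  makes every function involved integrable and keeps all suprema and infima finite.\<close>

lemma nn_integral_convex_combination:
  fixes M :: "'a measure" and p :: "nat \<Rightarrow> 'a measure"
  assumes sets_p: "\<And>i. i < k \<Longrightarrow> sets (p i) = sets M"
    and emeasure_M: "\<And>A. A \<in> sets M \<Longrightarrow> emeasure M A = (\<Sum>i<k. ennreal (w i) * emeasure (p i) A)"
    and f: "f \<in> borel_measurable M"
  shows "(\<integral>\<^sup>+x. f x \<partial>M) = (\<Sum>i<k. ennreal (w i) * (\<integral>\<^sup>+x. f x \<partial>p i))"
  using f
proof (induction rule: borel_measurable_induct)
  case (cong f g)
  have "space (p i) = space M" if "i < k" for i
    using sets_p[OF that] by (rule sets_eq_imp_space_eq)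
  with cong show ?case
    by (simp cong: nn_integral_cong_simp)
next
  case (set A)
  then show ?case
    using emeasure_M sets_p by simp
next
  case (mult u c)
  have "u \<in> borel_measurable (p i)" if "i < k" for i
    using mult(2) measurable_cong_sets[OF sets_p[OF that] refl] by blast
  with mult show ?case
    by (simp add: nn_integral_cmult sum_distrib_left ac_simps)
next
  case (add u v)
  have "u \<in> borel_measurable (p i)" "v \<in> borel_measurable (p i)" if "i < k" for i
    using add measurable_cong_sets[OF sets_p[OF that] refl] by blast+
  with add show ?case
    by (simp add: nn_integral_add sum.distrib distrib_left)
next
  case (seq U)
  have "U n \<in> borel_measurable (p i)" if "i < k" for i n
    using seq measurable_cong_sets[OF sets_p[OF that] refl] by blast
  then have "(\<integral>\<^sup>+x. (SUP n. U n x) \<partial>p i) = (SUP n. \<integral>\<^sup>+x. U n x \<partial>p i)" if "i < k" for i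
    using seq that by (intro nn_integral_monotone_convergence_SUP) auto
  moreover have "incseq (\<lambda>n. ennreal (w i) * (\<integral>\<^sup>+x. U n x \<partial>p i))" for i
    using seq by (intro monoI mult_left_mono nn_integral_mono) (auto simp: incseq_def le_fun_def)
  ultimately have "(\<Sum>i<k. ennreal (w i) * (\<integral>\<^sup>+x. (SUP n. U n x) \<partial>p i))
      = (SUP n. \<Sum>i<k. ennreal (w i) * (\<integral>\<^sup>+x. U n x \<partial>p i))"
    by (simp add: ennreal_SUP_sum SUP_mult_left_ennreal)
  moreover have "(\<integral>\<^sup>+x. (SUP n. U n x) \<partial>M) = (SUP n. \<integral>\<^sup>+x. U n x \<partial>M)"
    using seq by (intro nn_integral_monotone_convergence_SUP) auto
  ultimately show ?case
    unfolding SUP_apply using seq by simp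
qed

lemma
  fixes M :: "'a measure" and p :: "nat \<Rightarrow> 'a measure" and f :: "'a \<Rightarrow> real"
  assumes sets_p: "\<And>i. i < k \<Longrightarrow> sets (p i) = sets M"
    and w_nonneg: "\<And>i. i < k \<Longrightarrow> 0 \<le> w i"
    and emeasure_M: "\<And>A. A \<in> sets M \<Longrightarrow> emeasure M A = (\<Sum>i<k. ennreal (w i) * emeasure (p i) A)"
    and f: "f \<in> borel_measurable M"
    and integrable_p: "\<And>i. i < k \<Longrightarrow> integrable (p i) f"
  shows integrable_convex_combination: "integrable M f"
    and integral_convex_combination: "integral\<^sup>L M f = (\<Sum>i<k. w i * integral\<^sup>L (p i) f)"
proof -
  have nn_finite: "(\<integral>\<^sup>+x. ennreal (g x) \<partial>M) < \<infinity>"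
    and nn_real: "enn2real (\<integral>\<^sup>+x. ennreal (g x) \<partial>M) = (\<Sum>i<k. w i * enn2real (\<integral>\<^sup>+x. ennreal (g x) \<partial>p i))"
    if "g \<in> borel_measurable M" and "\<And>i. i < k \<Longrightarrow> integrable (p i) g" for g :: "'a \<Rightarrow> real"
  proof -
    have finite_terms: "ennreal (w i) * (\<integral>\<^sup>+x. ennreal (g x) \<partial>p i) < \<top>" if "i \<in> {..<k}" for i
      using that \<open>\<And>i. i < k \<Longrightarrow> integrable (p i) g\<close>
      by (simp add: real_integrable_def ennreal_mult_less_top less_top)
    have mixture: "(\<integral>\<^sup>+x. ennreal (g x) \<partial>M) = (\<Sum>i<k. ennreal (w i) * (\<integral>\<^sup>+x. ennreal (g x) \<partial>p i))"
      using that(1) by (intro nn_integral_convex_combination[OF sets_p emeasure_M]) auto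
    show "(\<integral>\<^sup>+x. ennreal (g x) \<partial>M) < \<infinity>"
      unfolding mixture using finite_terms by simp
    show "enn2real (\<integral>\<^sup>+x. ennreal (g x) \<partial>M) = (\<Sum>i<k. w i * enn2real (\<integral>\<^sup>+x. ennreal (g x) \<partial>p i))"
      unfolding mixture by (subst enn2real_sum[OF finite_terms]) (auto simp: enn2real_mult w_nonneg)
  qed
  have minus_f: "(\<lambda>x. - f x) \<in> borel_measurable M" "\<And>i. i < k \<Longrightarrow> integrable (p i) (\<lambda>x. - f x)"
    using f integrable_p by auto
  show integrable: "integrable M f"
    using nn_finite[OF f integrable_p] nn_finite[OF minus_f] f by (simp add: real_integrable_def less_top)
  show "integral\<^sup>L M f = (\<Sum>i<k. w i * integral\<^sup>L (p i) f)"
    using nn_real[OF f integrable_p] nn_real[OF minus_f] integrable integrable_p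
    by (simp add: real_lebesgue_integral_def sum_subtractf right_diff_distrib)
qed

lemma le_SUP_INF_of_le_at:
  fixes g :: "'b \<Rightarrow> 'c \<Rightarrow> real"
  assumes "A \<noteq> {}" and "v\<^sub>0 \<in> B" and "\<And>u. u \<in> A \<Longrightarrow> c \<le> g u v\<^sub>0"
    and bounded: "\<And>u v. u \<in> A \<Longrightarrow> v \<in> B \<Longrightarrow> \<bar>g u v\<bar> \<le> C"
  shows "c \<le> (SUP v\<in>B. INF u\<in>A. g u v)"
proof -
  obtain u\<^sub>0 where "u\<^sub>0 \<in> A" using \<open>A \<noteq> {}\<close> by blast
  have "bdd_below ((\<lambda>u. g u v) ` A)" if "v \<in> B" for v
    using bounded that by (intro bdd_belowI[of _ "- C"]) (force simp: abs_le_iff)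
  then have "(INF u\<in>A. g u v) \<le> C" if "v \<in> B" for v
    using bounded[OF \<open>u\<^sub>0 \<in> A\<close> that] \<open>u\<^sub>0 \<in> A\<close> that by (meson abs_le_D1 cINF_lower order_trans)
  then have "bdd_above ((\<lambda>v. INF u\<in>A. g u v) ` B)"
    by (intro bdd_aboveI[of _ C]) blast
  moreover have "c \<le> (INF u\<in>A. g u v\<^sub>0)"
    using assms(1,3) by (rule cINF_greatest)
  ultimately show ?thesis
    using \<open>v\<^sub>0 \<in> B\<close> by (meson cSUP_upper order_trans)
qed

lemma INF_SUP_le_of_le_at:
  fixes h :: "'b \<Rightarrow> 'c \<Rightarrow> real"
  assumes "A \<noteq> {}" and "v\<^sub>0 \<in> B" and "\<And>u. u \<in> A \<Longrightarrow> h u v\<^sub>0 \<le> c"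
    and bounded: "\<And>u v. u \<in> A \<Longrightarrow> v \<in> B \<Longrightarrow> \<bar>h u v\<bar> \<le> C"
  shows "(INF v\<in>B. SUP u\<in>A. h u v) \<le> c"
proof -
  have "- c \<le> (SUP v\<in>B. INF u\<in>A. - h u v)"
    using assms by (intro le_SUP_INF_of_le_at[where C = C]) auto
  moreover have "(SUP v\<in>B. INF u\<in>A. - h u v) = - (INF v\<in>B. SUP u\<in>A. h u v)"
    by (simp add: Inf_real_def image_image)
  ultimately show ?thesis by simp
qed

lemma abs_mult_diff_le:
  fixes y z u v V R :: real
  assumes "y\<^sup>2 \<le> V" "z\<^sup>2 \<le> V" "\<bar>u\<bar> \<le> R" "\<bar>v\<bar> \<le> R"
  shows "\<bar>(y - u) * (z - v)\<bar> \<le> (2 + 2 * R\<^sup>2) * (1 + V)"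
proof -
  have "\<bar>(y - u) * (z - v)\<bar> \<le> ((y - u)\<^sup>2 + (z - v)\<^sup>2) / 2"
    using sum_squares_bound[of "\<bar>y - u\<bar>" "\<bar>z - v\<bar>"] by (simp add: abs_mult)
  also have "\<dots> \<le> y\<^sup>2 + u\<^sup>2 + z\<^sup>2 + v\<^sup>2"
    using zero_le_power2[of "y + u"] zero_le_power2[of "z + v"] by (simp add: power2_eq_square algebra_simps)
  also have "\<dots> \<le> 2 * V + 2 * R\<^sup>2"
    using assms abs_le_square_iff[of u R] abs_le_square_iff[of v R] by simp
  also have "\<dots> \<le> (2 + 2 * R\<^sup>2) * (1 + V)"
    using order_trans[OF zero_le_power2 assms(1)] by (simp add: algebra_simps)
  finally show ?thesis .
qed

lemma (in prob_space) integral_mult_centered_shift: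
  fixes Y Z :: "'a \<Rightarrow> real"
  assumes "integrable M Z" and "integrable M (\<lambda>x. (Y x - c) * (Z x - expectation Z))"
  shows "expectation (\<lambda>x. (Y x - u) * (Z x - expectation Z)) = expectation (\<lambda>x. (Y x - c) * (Z x - expectation Z))"
proof -
  have "expectation (\<lambda>x. (Y x - u) * (Z x - expectation Z))
      = expectation (\<lambda>x. (Y x - c) * (Z x - expectation Z) + (c - u) * (Z x - expectation Z))"
    by (intro Bochner_Integration.integral_cong) (auto simp: algebra_simps)
  also have "\<dots> = expectation (\<lambda>x. (Y x - c) * (Z x - expectation Z)) + (c - u) * (expectation Z - expectation Z)"
    using assms by (simp add: prob_space)
  finally show ?thesis by simp
qed

lemma (in prob_space)
  fixes V f :: "'a \<Rightarrow> real"
  assumes "integrable M V" and "expectation V \<le> K" and "f \<in> borel_measurable M" and "0 \<le> C"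
    and le: "\<And>x. x \<in> space M \<Longrightarrow> \<bar>f x\<bar> \<le> C * (1 + V x)"
  shows integrable_of_abs_le_affine: "integrable M f"
    and abs_integral_le_affine: "\<bar>expectation f\<bar> \<le> C * (1 + K)"
proof -
  have bound: "integrable M (\<lambda>x. C * (1 + V x))"
    using assms(1) by (intro integrable_mult_right Bochner_Integration.integrable_add) auto
  show f: "integrable M f"
    using bound assms(3) by (rule Bochner_Integration.integrable_bound) (use le in \<open>auto intro: order.trans[OF _ abs_ge_self]\<close>)
  have "\<bar>expectation f\<bar> \<le> expectation (\<lambda>x. \<bar>f x\<bar>)"
    by (rule integral_abs_bound)
  also have "\<dots> \<le> expectation (\<lambda>x. C * (1 + V x))"
    using f bound le by (intro integral_mono) auto
  also have "\<dots> = C * (1 + expectation V)"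
    using assms(1) by (simp add: prob_space)
  also have "\<dots> \<le> C * (1 + K)"
    using assms(2,4) by (simp add: mult_left_mono)
  finally show "\<bar>expectation f\<bar> \<le> C * (1 + K)" .
qed

lemma
  fixes Ps :: "'a measure set" and V :: "'a \<Rightarrow> real"
  assumes "(SUP P\<in>Ps. \<integral>\<^sup>+x. ennreal (V x) \<partial>P) < \<infinity>" and "P \<in> Ps"
    and "V \<in> borel_measurable P" and "\<And>x. 0 \<le> V x"
  shows integrable_of_SUP_nn_integral_finite: "integrable P V"
    and integral_le_SUP_nn_integral: "integral\<^sup>L P V \<le> enn2real (SUP P\<in>Ps. \<integral>\<^sup>+x. ennreal (V x) \<partial>P)"
proof -
  have le_SUP: "(\<integral>\<^sup>+x. ennreal (V x) \<partial>P) \<le> (SUP P\<in>Ps. \<integral>\<^sup>+x. ennreal (V x) \<partial>P)"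
    using \<open>P \<in> Ps\<close> by (rule SUP_upper)
  show "integrable P V"
    using assms le_SUP by (intro integrableI_nonneg) (auto intro: le_less_trans)
  have "integral\<^sup>L P V = enn2real (\<integral>\<^sup>+x. ennreal (V x) \<partial>P)"
    using assms by (intro integral_eq_nn_integral) auto
  also have "\<dots> \<le> enn2real (SUP P\<in>Ps. \<integral>\<^sup>+x. ennreal (V x) \<partial>P)"
    using assms(1) le_SUP by (intro enn2real_mono) auto
  finally show "integral\<^sup>L P V \<le> enn2real (SUP P\<in>Ps. \<integral>\<^sup>+x. ennreal (V x) \<partial>P)" .
qed

lemma measure_coE:
  assumes "Q \<in> measure_co \<Omega> Ps"
  obtains k :: nat and p :: "nat \<Rightarrow> 'a measure" and w :: "nat \<Rightarrow> real"
  where "sets Q = sets \<Omega>" "\<And>i. i < k \<Longrightarrow> p i \<in> Ps" "\<And>i. i < k \<Longrightarrow> 0 \<le> w i"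
    "(\<Sum>i<k. w i) = 1" "\<And>A. A \<in> sets \<Omega> \<Longrightarrow> emeasure Q A = (\<Sum>i<k. ennreal (w i) * emeasure (p i) A)"
  using assms unfolding measure_co_def by blast

locale sublinear_expectation =
  fixes \<Omega> :: "'a measure" and Ps :: "'a measure set"
  assumes Ps_nonempty: "Ps \<noteq> {}"
    and prob_space_Ps: "P \<in> Ps \<Longrightarrow> prob_space P"
    and sets_Ps: "P \<in> Ps \<Longrightarrow> sets P = sets \<Omega>"
begin

lemma prob_space_measure_co:
  assumes "Q \<in> measure_co \<Omega> Ps"
  shows "prob_space Q"
proof
  obtain k :: nat and p w where Q: "sets Q = sets \<Omega>" and p: "\<And>i. i < k \<Longrightarrow> p i \<in> Ps"
    and w: "\<And>i. i < k \<Longrightarrow> 0 \<le> w i" "(\<Sum>i<k. w i) = 1"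
    and emeasure_Q: "\<And>A. A \<in> sets \<Omega> \<Longrightarrow> emeasure Q A = (\<Sum>i<k. ennreal (w i) * emeasure (p i) A)"
    using assms by (rule measure_coE) blast
  have "emeasure (p i) (space \<Omega>) = 1" if "i < k" for i
    using prob_space.emeasure_space_1[OF prob_space_Ps] sets_eq_imp_space_eq[OF sets_Ps] p that by metis
  then have "emeasure Q (space Q) = (\<Sum>i<k. ennreal (w i))"
    using emeasure_Q[of "space \<Omega>"] sets_eq_imp_space_eq[OF Q] by simp
  also have "\<dots> = 1"
    using w by (subst sum_ennreal) auto
  finally show "emeasure Q (space Q) = 1" .
qed

lemma
  assumes Q: "Q \<in> measure_co \<Omega> Ps" and f: "f \<in> borel_measurable \<Omega>"
    and integrable: "\<And>P. P \<in> Ps \<Longrightarrow> integrable P f"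
  shows integrable_measure_co: "integrable Q f"
    and integral_measure_co_le_sub_exp:
      "bdd_above ((\<lambda>P. integral\<^sup>L P f) ` Ps) \<Longrightarrow> integral\<^sup>L Q f \<le> sub_exp Ps f"
proof -
  obtain k :: nat and p w where sets_Q: "sets Q = sets \<Omega>" and p: "\<And>i. i < k \<Longrightarrow> p i \<in> Ps"
    and w: "\<And>i. i < k \<Longrightarrow> 0 \<le> w i" "(\<Sum>i<k. w i) = 1"
    and emeasure_Q: "\<And>A. A \<in> sets \<Omega> \<Longrightarrow> emeasure Q A = (\<Sum>i<k. ennreal (w i) * emeasure (p i) A)"
    using Q by (rule measure_coE) blast
  have f_Q: "f \<in> borel_measurable Q"
    using f by (simp add: measurable_cong_sets[OF sets_Q refl])
  note mixture = sets_Ps[OF p, folded sets_Q] w(1) emeasure_Q[folded sets_Q] f_Q integrable[OF p]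
  show "integrable Q f"
    by (rule integrable_convex_combination[OF mixture])
  assume bdd: "bdd_above ((\<lambda>P. integral\<^sup>L P f) ` Ps)"
  have "integral\<^sup>L Q f = (\<Sum>i<k. w i * integral\<^sup>L (p i) f)"
    by (rule integral_convex_combination[OF mixture])
  also have "\<dots> \<le> (\<Sum>i<k. w i * sub_exp Ps f)"
    unfolding sub_exp_def using p w bdd by (intro sum_mono mult_left_mono cSUP_upper) auto
  also have "\<dots> = sub_exp Ps f"
    using w by (simp add: sum_distrib_right[symmetric])
  finally show "integral\<^sup>L Q f \<le> sub_exp Ps f" .
qed

lemma abs_sub_exp_le:
  assumes "\<And>P. P \<in> Ps \<Longrightarrow> \<bar>integral\<^sup>L P f\<bar> \<le> C"
  shows "\<bar>sub_exp Ps f\<bar> \<le> C"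
proof -
  obtain P where "P \<in> Ps" using Ps_nonempty by blast
  have "bdd_above ((\<lambda>P. integral\<^sup>L P f) ` Ps)"
    using assms by (intro bdd_aboveI[of _ C]) (force simp: abs_le_iff)
  then have "integral\<^sup>L P f \<le> sub_exp Ps f"
    unfolding sub_exp_def by (rule cSUP_upper[OF \<open>P \<in> Ps\<close>])
  moreover have "sub_exp Ps f \<le> C"
    unfolding sub_exp_def using Ps_nonempty assms by (intro cSUP_least) (auto simp: abs_le_iff)
  ultimately show ?thesis
    using assms[OF \<open>P \<in> Ps\<close>] by linarith
qed

end

locale dominated_sublinear_expectation = sublinear_expectation +
  fixes V :: "'a \<Rightarrow> real" and K :: real
  assumes integrable_V: "P \<in> Ps \<Longrightarrow> integrable P V"
    and integral_V_le: "P \<in> Ps \<Longrightarrow> integral\<^sup>L P V \<le> K"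
begin

definition dominated :: "real \<Rightarrow> ('a \<Rightarrow> real) \<Rightarrow> bool" where
  "dominated C f \<longleftrightarrow> 0 \<le> C \<and> f \<in> borel_measurable \<Omega> \<and> (\<forall>\<omega>\<in>space \<Omega>. \<bar>f \<omega>\<bar> \<le> C * (1 + V \<omega>))"

lemma dominated_uminus: "dominated C f \<Longrightarrow> dominated C (\<lambda>\<omega>. - f \<omega>)"
  by (simp add: dominated_def)

lemma
  assumes "dominated C f" and "P \<in> Ps"
  shows integrable_dominated: "integrable P f"
    and abs_integral_dominated_le: "\<bar>integral\<^sup>L P f\<bar> \<le> C * (1 + K)"
proof -
  interpret P: prob_space P
    using \<open>P \<in> Ps\<close> by (rule prob_space_Ps)
  have sets_P: "sets P = sets \<Omega>"
    using \<open>P \<in> Ps\<close> by (rule sets_Ps)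
  have "f \<in> borel_measurable P"
    using assms(1) by (simp add: dominated_def measurable_cong_sets[OF sets_P refl])
  moreover have "\<And>x. x \<in> space P \<Longrightarrow> \<bar>f x\<bar> \<le> C * (1 + V x)" and "0 \<le> C"
    using assms(1) by (simp_all add: dominated_def sets_eq_imp_space_eq[OF sets_P])
  ultimately show "integrable P f" and "\<bar>integral\<^sup>L P f\<bar> \<le> C * (1 + K)"
    using P.integrable_of_abs_le_affine[OF integrable_V integral_V_le] P.abs_integral_le_affine[OF integrable_V integral_V_le]
      \<open>P \<in> Ps\<close> by blast+
qed

lemma abs_sub_exp_dominated_le: "dominated C f \<Longrightarrow> \<bar>sub_exp Ps f\<bar> \<le> C * (1 + K)"
  by (rule abs_sub_exp_le) (rule abs_integral_dominated_le)

lemma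
  assumes Q: "Q \<in> measure_co \<Omega> Ps" and f: "dominated C f"
  shows integrable_measure_co_dominated: "integrable Q f"
    and integral_measure_co_dominated_le: "integral\<^sup>L Q f \<le> sub_exp Ps f"
    and lower_le_integral_measure_co_dominated: "- sub_exp Ps (\<lambda>\<omega>. - f \<omega>) \<le> integral\<^sup>L Q f"
proof -
  have "integrable Q g \<and> integral\<^sup>L Q g \<le> sub_exp Ps g" if "dominated C g" for g
  proof -
    have "bdd_above ((\<lambda>P. integral\<^sup>L P g) ` Ps)"
      using abs_integral_dominated_le[OF that] by (intro bdd_aboveI[of _ "C * (1 + K)"]) (force simp: abs_le_iff)
    then show ?thesis
      using Q that integrable_dominated[OF that]
      by (simp add: dominated_def integrable_measure_co integral_measure_co_le_sub_exp)
  qed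
  from this[OF f] this[OF dominated_uminus[OF f]]
  show "integrable Q f" "integral\<^sup>L Q f \<le> sub_exp Ps f" "- sub_exp Ps (\<lambda>\<omega>. - f \<omega>) \<le> integral\<^sup>L Q f"
    by auto
qed

lemma
  assumes "dominated C f"
  shows mean_interval_dominated: "mean_interval Ps f \<subseteq> {- C * (1 + K) .. C * (1 + K)}"
    and integral_measure_co_mem_mean_interval:
      "Q \<in> measure_co \<Omega> Ps \<Longrightarrow> integral\<^sup>L Q f \<in> mean_interval Ps f"
  using abs_sub_exp_dominated_le[OF assms] abs_sub_exp_dominated_le[OF dominated_uminus[OF assms]]
    integral_measure_co_dominated_le[OF _ assms] lower_le_integral_measure_co_dominated[OF _ assms]
  by (auto simp: mean_interval_def lower_mean_def upper_mean_def abs_le_iff)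

lemma dominated_of_square_le:
  assumes "f \<in> borel_measurable \<Omega>" and "\<And>\<omega>. \<omega> \<in> space \<Omega> \<Longrightarrow> (f \<omega>)\<^sup>2 \<le> V \<omega>"
  shows "dominated 1 f"
proof -
  have "\<bar>y\<bar> \<le> 1 + y\<^sup>2" for y :: real
    using zero_le_power2[of "\<bar>y\<bar> - 1"] abs_ge_zero[of y] unfolding power2_diff by simp
  then have "\<bar>f \<omega>\<bar> \<le> 1 + V \<omega>" if "\<omega> \<in> space \<Omega>" for \<omega>
    using assms(2)[OF that] by (meson add_left_mono order_trans)
  with assms(1) show ?thesis
    unfolding dominated_def by simp
qed

lemma dominated_centered_product:
  assumes Y: "Y \<in> borel_measurable \<Omega>" "\<And>\<omega>. \<omega> \<in> space \<Omega> \<Longrightarrow> (Y \<omega>)\<^sup>2 \<le> V \<omega>"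
    and Z: "Z \<in> borel_measurable \<Omega>" "\<And>\<omega>. \<omega> \<in> space \<Omega> \<Longrightarrow> (Z \<omega>)\<^sup>2 \<le> V \<omega>"
    and "u \<in> mean_interval Ps Y" and "v \<in> mean_interval Ps Z"
  shows "dominated (2 + 2 * (1 + K)\<^sup>2) (\<lambda>\<omega>. (Y \<omega> - u) * (Z \<omega> - v))"
proof -
  have "dominated 1 Y" and "dominated 1 Z"
    using Y Z by (simp_all add: dominated_of_square_le)
  then have "\<bar>u\<bar> \<le> 1 + K" and "\<bar>v\<bar> \<le> 1 + K"
    using assms(5,6) by (auto simp: abs_le_iff subset_iff dest!: mean_interval_dominated)
  then show ?thesis
    using Y Z by (simp add: dominated_def abs_mult_diff_le)
qed

lemma covariance_measure_co_between_lower_upper_cov: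
  assumes Q: "Q \<in> measure_co \<Omega> Ps"
    and Y: "Y \<in> borel_measurable \<Omega>" "\<And>\<omega>. \<omega> \<in> space \<Omega> \<Longrightarrow> (Y \<omega>)\<^sup>2 \<le> V \<omega>"
    and Z: "Z \<in> borel_measurable \<Omega>" "\<And>\<omega>. \<omega> \<in> space \<Omega> \<Longrightarrow> (Z \<omega>)\<^sup>2 \<le> V \<omega>"
  defines "c \<equiv> \<integral>\<omega>. (Y \<omega> - (\<integral>\<omega>. Y \<omega> \<partial>Q)) * (Z \<omega> - (\<integral>\<omega>. Z \<omega> \<partial>Q)) \<partial>Q"
  shows "lower_cov Ps Y Z \<le> c \<and> c \<le> upper_cov Ps Y Z"
proof -
  interpret Q: prob_space Q
    using Q by (rule prob_space_measure_co)
  have product: "dominated (2 + 2 * (1 + K)\<^sup>2) (\<lambda>\<omega>. (Y \<omega> - u) * (Z \<omega> - v))"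
    if "u \<in> mean_interval Ps Y" "v \<in> mean_interval Ps Z" for u v
    using Y Z that by (rule dominated_centered_product)
  define C where "C = (2 + 2 * (1 + K)\<^sup>2) * (1 + K)"
  have Y_dominated: "dominated 1 Y" and Z_dominated: "dominated 1 Z"
    using Y Z by (simp_all add: dominated_of_square_le)
  have mean_Y: "Q.expectation Y \<in> mean_interval Ps Y" and mean_Z: "Q.expectation Z \<in> mean_interval Ps Z"
    using Q Y_dominated Z_dominated by (simp_all add: integral_measure_co_mem_mean_interval)
  have "integrable Q (\<lambda>\<omega>. (Y \<omega> - Q.expectation Y) * (Z \<omega> - Q.expectation Z))"
    by (rule integrable_measure_co_dominated[OF Q product[OF mean_Y mean_Z]])
  then have shift: "Q.expectation (\<lambda>\<omega>. (Y \<omega> - u) * (Z \<omega> - Q.expectation Z)) = c" for u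
    unfolding c_def
    by (rule Q.integral_mult_centered_shift[OF integrable_measure_co_dominated[OF Q Z_dominated]])
  have bounded: "\<bar>sub_exp Ps (\<lambda>\<omega>. (Y \<omega> - u) * (Z \<omega> - v))\<bar> \<le> C"
    "\<bar>- sub_exp Ps (\<lambda>\<omega>. - ((Y \<omega> - u) * (Z \<omega> - v)))\<bar> \<le> C"
    if "u \<in> mean_interval Ps Y" "v \<in> mean_interval Ps Z" for u v
    using abs_sub_exp_dominated_le[OF product[OF that]]
      abs_sub_exp_dominated_le[OF dominated_uminus[OF product[OF that]]]
    unfolding C_def by auto
  have "lower_cov Ps Y Z \<le> c"
    unfolding lower_cov_def
  proof (rule INF_SUP_le_of_le_at[OF _ mean_Z])
    show "mean_interval Ps Y \<noteq> {}"
      using mean_Y by blast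
    show "- sub_exp Ps (\<lambda>\<omega>. - ((Y \<omega> - u) * (Z \<omega> - Q.expectation Z))) \<le> c" if "u \<in> mean_interval Ps Y" for u
      using lower_le_integral_measure_co_dominated[OF Q product[OF that mean_Z]] by (simp add: shift)
  qed (rule bounded)
  moreover have "c \<le> upper_cov Ps Y Z"
    unfolding upper_cov_def
  proof (rule le_SUP_INF_of_le_at[OF _ mean_Z])
    show "mean_interval Ps Y \<noteq> {}"
      using mean_Y by blast
    show "c \<le> sub_exp Ps (\<lambda>\<omega>. (Y \<omega> - u) * (Z \<omega> - Q.expectation Z))" if "u \<in> mean_interval Ps Y" for u
      using integral_measure_co_dominated_le[OF Q product[OF that mean_Z]] by (simp add: shift)
  qed (rule bounded)
  ultimately show ?thesis ..
qed

end

theorem proposition4p8: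
  fixes \<Omega> :: "'a measure" and Ps :: "'a measure set" and X :: "'a \<Rightarrow> real ^ 'n"
  assumes "Ps \<noteq> {}"
    and "\<And>P. P \<in> Ps \<Longrightarrow> prob_space P \<and> sets P = sets \<Omega>"
    and "X \<in> borel_measurable \<Omega>"
    and "(SUP P\<in>Ps. \<integral>\<^sup>+ \<omega>. ennreal ((norm (X \<omega>))\<^sup>2) \<partial>P) < \<infinity>"
    and "\<Sigma> \<in> cov_set \<Omega> Ps X"
  shows "\<forall>i j. lower_cov Ps (\<lambda>\<omega>. X \<omega> $ i) (\<lambda>\<omega>. X \<omega> $ j) \<le> \<Sigma> $ i $ j \<and>
               \<Sigma> $ i $ j \<le> upper_cov Ps (\<lambda>\<omega>. X \<omega> $ i) (\<lambda>\<omega>. X \<omega> $ j)"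
proof (intro allI)
  fix i j
  have X_P: "(\<lambda>\<omega>. (norm (X \<omega>))\<^sup>2) \<in> borel_measurable P" if "P \<in> Ps" for P
    using assms(2)[OF that] assms(3) by (simp add: measurable_cong_sets[of P \<Omega>])
  interpret dominated_sublinear_expectation \<Omega> Ps "\<lambda>\<omega>. (norm (X \<omega>))\<^sup>2"
    "enn2real (SUP P\<in>Ps. \<integral>\<^sup>+ \<omega>. ennreal ((norm (X \<omega>))\<^sup>2) \<partial>P)"
    by (intro dominated_sublinear_expectation.intro sublinear_expectation.intro
        dominated_sublinear_expectation_axioms.intro)
      (simp_all add: assms(1,2) X_P integrable_of_SUP_nn_integral_finite[OF assms(4)]
        integral_le_SUP_nn_integral[OF assms(4)])
  obtain Q where Q: "Q \<in> measure_co \<Omega> Ps" and \<Sigma>: "\<Sigma> = cov_matrix Q X"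
    using assms(5) unfolding cov_set_def by blast
  have component: "(\<lambda>\<omega>. X \<omega> $ l) \<in> borel_measurable \<Omega>" "(X \<omega> $ l)\<^sup>2 \<le> (norm (X \<omega>))\<^sup>2" for l \<omega>
    using measurable_compose[OF assms(3) borel_measurable_nth] component_le_norm_cart[of "X \<omega>" l]
    by (simp_all add: abs_le_square_iff[symmetric])
  show "lower_cov Ps (\<lambda>\<omega>. X \<omega> $ i) (\<lambda>\<omega>. X \<omega> $ j) \<le> \<Sigma> $ i $ j \<and>
      \<Sigma> $ i $ j \<le> upper_cov Ps (\<lambda>\<omega>. X \<omega> $ i) (\<lambda>\<omega>. X \<omega> $ j)"
    unfolding \<Sigma> cov_matrix_def
    using covariance_measure_co_between_lower_upper_cov[OF Q component component] by simp
qed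

end
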